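(* Let $\mathcal H=(V,E)$ be a hypergraph with splitting functions and let $R\subseteq V$ satisfy $0<\mathrm{vol}(R)\le\mathrm{vol}(\bar R)$. Let $\varepsilon_0=\mathrm{vol}(R)/\mathrm{vol}(\bar R)$, let $\varepsilon\in[\varepsilon_0,\varepsilon_0+1)$, and set $\mu=\varepsilon-\varepsilon_0\ge0$. Let $S^*$ be a minimizer of $\mathrm{HLC}$ over all subsets of $V$; this is the set returned by Algorithm 1. Let $T\subseteq V$ satisfy $0<\mathrm{vol}(T)\le\mathrm{vol}(\bar T)$, and suppose that for some $\beta\in\left(\frac{2\mu}{1+2\mu},1\right)$, $$\frac{\mathrm{vol}(T\cap R)}{\mathrm{vol}(T)}\ge\frac{\mathrm{vol}(\bar T\cap R)}{\mathrm{vol}(\bar T)}+\beta.$$ Then $$\mathrm{ncut}(S^* )\le\frac{1}{\beta+2\mu\beta-2\mu}\,\mathrm{ncut}(T).$$ In particular, when $\varepsilon=\varepsilon_0$ we get $\mathrm{ncut}(S^* )\le\frac1\beta\mathrm{ncut}(T)$.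
   Context: A hypergraph $\mathcal H=(V,E)$ has a finite node set $V$, and each hyperedge $e\in E$ is a subset of $V$. Each hyperedge $e$ carries a splitting function $w_e:2^e\to\mathbb R_{\ge0}$ satisfying $w_e(A)=w_e(e\setminus A)$ for all $A\subseteq e$ and $w_e(\emptyset)=w_e(e)=0$. For $S\subseteq V$, $\mathrm{cut}_{\mathcal H}(S)=\sum_{e\in E}w_e(e\cap S)$. The degree of $v$ is $d_v=\sum_{e\ni v}w_e(\{v\})$, and $\mathrm{vol}(S)=\sum_{v\in S}d_v$. Write $\bar S=V\setminus S$. Hypergraph normalized cut is $\mathrm{ncut}(S)=\frac{\mathrm{cut}_{\mathcal H}(S)}{\mathrm{vol}(S)}+\frac{\mathrm{cut}_{\mathcal H}(\bar S)}{\mathrm{vol}(\bar S)}$. Define $\Omega_{R,\varepsilon}(S)=\mathrm{vol}(S\cap R)-\varepsilon\,\mathrm{vol}(S\cap\bar R)$. Set $\mathrm{HLC}(S)=\mathrm{cut}_{\mathcal H}(S)/\Omega_{R,\varepsilon}(S)$ if $\Omega_{R,\varepsilon}(S)>0$, and $\mathrm{HLC}(S)=\infty$ otherwise. *)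

theory Defs
  imports "HOL-Library.Extended_Real"
begin

definition hypergraph :: "'a set \<Rightarrow> 'a set set \<Rightarrow> ('a set \<Rightarrow> 'a set \<Rightarrow> real) \<Rightarrow> bool" where
  "hypergraph V E w \<longleftrightarrow> finite V \<and> finite E \<and> (\<forall>e\<in>E. e \<subseteq> V) \<and>
     (\<forall>e\<in>E. \<forall>A. A \<subseteq> e \<longrightarrow> w e A \<ge> 0 \<and> w e A = w e (e - A)) \<and>
     (\<forall>e\<in>E. w e {} = 0 \<and> w e e = 0)"

definition hcut :: "'a set set \<Rightarrow> ('a set \<Rightarrow> 'a set \<Rightarrow> real) \<Rightarrow> 'a set \<Rightarrow> real" where
  "hcut E w S = (\<Sum>e\<in>E. w e (e \<inter> S))"

definition hdeg :: "'a set set \<Rightarrow> ('a set \<Rightarrow> 'a set \<Rightarrow> real) \<Rightarrow> 'a \<Rightarrow> real" where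
  "hdeg E w v = (\<Sum>e\<in>{e\<in>E. v \<in> e}. w e {v})"

definition hvol :: "'a set set \<Rightarrow> ('a set \<Rightarrow> 'a set \<Rightarrow> real) \<Rightarrow> 'a set \<Rightarrow> real" where
  "hvol E w S = (\<Sum>v\<in>S. hdeg E w v)"

definition ncut :: "'a set \<Rightarrow> 'a set set \<Rightarrow> ('a set \<Rightarrow> 'a set \<Rightarrow> real) \<Rightarrow> 'a set \<Rightarrow> real" where
  "ncut V E w S = hcut E w S / hvol E w S + hcut E w (V - S) / hvol E w (V - S)"

definition Omega :: "'a set \<Rightarrow> 'a set set \<Rightarrow> ('a set \<Rightarrow> 'a set \<Rightarrow> real) \<Rightarrow> 'a set \<Rightarrow> real \<Rightarrow> 'a set \<Rightarrow> real" where
  "Omega V E w R \<epsilon> S = hvol E w (S \<inter> R) - \<epsilon> * hvol E w (S \<inter> (V - R))"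

definition HLC :: "'a set \<Rightarrow> 'a set set \<Rightarrow> ('a set \<Rightarrow> 'a set \<Rightarrow> real) \<Rightarrow> 'a set \<Rightarrow> real \<Rightarrow> 'a set \<Rightarrow> ereal" where
  "HLC V E w R \<epsilon> S = (if Omega V E w R \<epsilon> S > 0
      then ereal (hcut E w S / Omega V E w R \<epsilon> S) else \<infinity>)"

end

theory Submission imports Defs begin

text \<open>Write \<open>N = vol(V - R)\<close> and \<open>M = vol V\<close>, so that
  \<open>ncut X = cut X * M / (vol X * vol(V - X))\<close>. For every \<open>X\<close> one has
  \<open>N * \<Omega>(X) \<le> vol X * vol(V - X)\<close> as soon as \<open>\<epsilon> \<ge> \<epsilon>\<^sub>0\<close>, whereas the separation
  hypothesis on \<open>T\<close> gives the reverse bound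
  \<open>N * \<Omega>(T) \<ge> (\<beta> + 2\<mu>\<beta> - 2\<mu>) * vol T * vol(V - T)\<close>. Hence
  \<open>ncut S \<le> (M/N) * cut S / \<Omega>(S) \<le> (M/N) * cut T / \<Omega>(T) \<le> ncut T / (\<beta> + 2\<mu>\<beta> - 2\<mu>)\<close>,
  the middle step being the minimality of \<open>S\<close> for HLC.\<close>

text \<open>In the next two lemmas \<open>a, b, c, d\<close> are the volumes of \<open>X \<inter> R\<close>, \<open>X - R\<close>,
  \<open>R - X\<close> and the complement of \<open>X \<union> R\<close>.\<close>

lemma omega_cells_le:
  fixes a b c d \<epsilon> :: real
  assumes "a \<ge> 0" "b \<ge> 0" "c \<ge> 0" "d \<ge> 0" "b + d > 0" "(a + c) / (b + d) \<le> \<epsilon>"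
  shows "(a - \<epsilon> * b) * (b + d) \<le> (a + b) * (c + d)"
proof -
  have "(a + c) / (b + d) * b \<le> \<epsilon> * b" using assms by (intro mult_right_mono) auto
  hence "(a + c) * b \<le> \<epsilon> * b * (b + d)" using assms(5) by (simp add: field_simps)
  hence "(a - \<epsilon> * b) * (b + d) \<le> a * (b + d) - (a + c) * b" by (simp add: algebra_simps)
  also have "\<dots> \<le> (a + b) * (c + d)" using assms(1-4) by (simp add: algebra_simps)
  finally show ?thesis .
qed

lemma omega_cells_ge_separated:
  fixes a b c d \<epsilon> \<mu> \<beta> :: real
  assumes nonneg: "a \<ge> 0" "b \<ge> 0" "c \<ge> 0" "d \<ge> 0"
    and "b + d > 0" and \<epsilon>: "\<epsilon> = (a + c) / (b + d) + \<mu>" and "\<mu> \<ge> 0"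
    and X: "a + b > 0" "a + b \<le> c + d"
    and sep: "c / (c + d) + \<beta> \<le> a / (a + b)"
  shows "(\<beta> + 2 * \<mu> * \<beta> - 2 * \<mu>) * ((a + b) * (c + d)) \<le> (a - \<epsilon> * b) * (b + d)"
proof -
  have "c + d > 0" using X by linarith
  have "a / (a + b) * ((a + b) * (c + d)) \<ge> (c / (c + d) + \<beta>) * ((a + b) * (c + d))"
    using sep X \<open>c + d > 0\<close> by (intro mult_right_mono) auto
  moreover have "a / (a + b) * ((a + b) * (c + d)) = a * (c + d)" using X by simp
  moreover have "(c / (c + d) + \<beta>) * ((a + b) * (c + d)) = c * (a + b) + \<beta> * (a + b) * (c + d)"
    using \<open>c + d > 0\<close> by (simp add: field_simps)
  ultimately have ad_bc: "\<beta> * (a + b) * (c + d) \<le> a * d - b * c" by (simp add: algebra_simps)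
  have "c / (c + d) \<ge> 0" using nonneg by simp
  hence "\<beta> \<le> a / (a + b)" using sep by linarith
  hence "b \<le> (1 - \<beta>) * (a + b)" using X by (simp add: field_simps)
  moreover have "b + d \<le> 2 * (c + d)" using X(2) nonneg(1,3) by simp
  ultimately have mu_term: "\<mu> * b * (b + d) \<le> \<mu> * ((1 - \<beta>) * (a + b)) * (2 * (c + d))"
    using \<open>\<mu> \<ge> 0\<close> nonneg by (intro mult_mono mult_left_mono) auto
  have "(a - \<epsilon> * b) * (b + d) = a * d - b * c - \<mu> * b * (b + d)"
    using \<open>b + d > 0\<close> unfolding \<epsilon> by (simp add: field_simps)
  thus ?thesis using ad_bc mu_term by (simp add: algebra_simps)
qed

lemma hypergraph_finite: "hypergraph V E w \<Longrightarrow> finite V"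
  unfolding hypergraph_def by blast

lemma hvol_nonneg: "hypergraph V E w \<Longrightarrow> hvol E w X \<ge> 0"
  unfolding hypergraph_def hvol_def hdeg_def by (intro sum_nonneg) blast

lemma hcut_nonneg: "hypergraph V E w \<Longrightarrow> hcut E w X \<ge> 0"
  unfolding hypergraph_def hcut_def by (intro sum_nonneg) blast

lemma hcut_Diff:
  assumes "hypergraph V E w" shows "hcut E w (V - S) = hcut E w S"
  unfolding hcut_def
proof (rule sum.cong[OF refl])
  fix e assume "e \<in> E"
  hence "e \<subseteq> V" "w e (e \<inter> S) = w e (e - e \<inter> S)"
    using assms unfolding hypergraph_def by blast+
  moreover have "e \<inter> (V - S) = e - e \<inter> S" using \<open>e \<subseteq> V\<close> by blast
  ultimately show "w e (e \<inter> (V - S)) = w e (e \<inter> S)" by simp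
qed
lemma hvol_Diff: "finite V \<Longrightarrow> X \<subseteq> V \<Longrightarrow> hvol E w (V - X) = hvol E w V - hvol E w X"
  unfolding hvol_def by (simp add: sum_diff)

lemma hvol_split: "finite X \<Longrightarrow> hvol E w X = hvol E w (X \<inter> Y) + hvol E w (X - Y)"
  unfolding hvol_def by (rule sum.Int_Diff)

lemma hvol_cells:
  assumes "finite V" "X \<subseteq> V" "R \<subseteq> V"
  shows "hvol E w X = hvol E w (X \<inter> R) + hvol E w (X \<inter> (V - R))"
    and "hvol E w (V - X) = hvol E w ((V - X) \<inter> R) + hvol E w ((V - X) \<inter> (V - R))"
    and "hvol E w R = hvol E w (X \<inter> R) + hvol E w ((V - X) \<inter> R)"
    and "hvol E w (V - R) = hvol E w (X \<inter> (V - R)) + hvol E w ((V - X) \<inter> (V - R))"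
proof -
  have fin: "finite X" "finite R" "finite (V - X)" "finite (V - R)"
    using assms finite_subset by auto
  have "X - R = X \<inter> (V - R)" "(V - X) - R = (V - X) \<inter> (V - R)"
    "R - X = (V - X) \<inter> R" "(V - R) - X = (V - X) \<inter> (V - R)"
    using assms by auto
  moreover have "R \<inter> X = X \<inter> R" "(V - R) \<inter> X = X \<inter> (V - R)" by auto
  ultimately show "hvol E w X = hvol E w (X \<inter> R) + hvol E w (X \<inter> (V - R))"
    and "hvol E w (V - X) = hvol E w ((V - X) \<inter> R) + hvol E w ((V - X) \<inter> (V - R))"
    and "hvol E w R = hvol E w (X \<inter> R) + hvol E w ((V - X) \<inter> R)"
    and "hvol E w (V - R) = hvol E w (X \<inter> (V - R)) + hvol E w ((V - X) \<inter> (V - R))"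
    using hvol_split[OF fin(1), of E w R] hvol_split[OF fin(3), of E w R]
      hvol_split[OF fin(2), of E w X] hvol_split[OF fin(4), of E w X] by simp_all
qed

lemma Omega_le_hvol_product:
  assumes H: "hypergraph V E w" and "R \<subseteq> V" "X \<subseteq> V" "hvol E w (V - R) > 0"
    and "hvol E w R / hvol E w (V - R) \<le> \<epsilon>"
  shows "hvol E w (V - R) * Omega V E w R \<epsilon> X \<le> hvol E w X * hvol E w (V - X)"
proof -
  define a where "a = hvol E w (X \<inter> R)"
  define b where "b = hvol E w (X \<inter> (V - R))"
  define c where "c = hvol E w ((V - X) \<inter> R)"
  define d where "d = hvol E w ((V - X) \<inter> (V - R))"
  note cells = hvol_cells[OF hypergraph_finite[OF H] \<open>X \<subseteq> V\<close> \<open>R \<subseteq> V\<close>, of E w,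
      folded a_def b_def c_def d_def]
  have nonneg: "a \<ge> 0" "b \<ge> 0" "c \<ge> 0" "d \<ge> 0"
    unfolding a_def b_def c_def d_def using hvol_nonneg[OF H] by auto
  have "b + d > 0" "(a + c) / (b + d) \<le> \<epsilon>" using assms(4,5) cells(3,4) by simp_all
  hence "(a - \<epsilon> * b) * (b + d) \<le> (a + b) * (c + d)" by (rule omega_cells_le[OF nonneg])
  thus ?thesis using cells unfolding Omega_def a_def[symmetric] b_def[symmetric]
    by (simp add: mult.commute)
qed

lemma Omega_ge_hvol_product_separated:
  assumes H: "hypergraph V E w" and "R \<subseteq> V" "T \<subseteq> V" "hvol E w (V - R) > 0"
    and "0 \<le> \<mu>" "\<epsilon> = hvol E w R / hvol E w (V - R) + \<mu>"
    and "0 < hvol E w T" "hvol E w T \<le> hvol E w (V - T)"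
    and "hvol E w ((V - T) \<inter> R) / hvol E w (V - T) + \<beta> \<le> hvol E w (T \<inter> R) / hvol E w T"
  shows "(\<beta> + 2 * \<mu> * \<beta> - 2 * \<mu>) * (hvol E w T * hvol E w (V - T))
           \<le> hvol E w (V - R) * Omega V E w R \<epsilon> T"
proof -
  define a where "a = hvol E w (T \<inter> R)"
  define b where "b = hvol E w (T \<inter> (V - R))"
  define c where "c = hvol E w ((V - T) \<inter> R)"
  define d where "d = hvol E w ((V - T) \<inter> (V - R))"
  note cells = hvol_cells[OF hypergraph_finite[OF H] \<open>T \<subseteq> V\<close> \<open>R \<subseteq> V\<close>, of E w,
      folded a_def b_def c_def d_def]
  have nonneg: "a \<ge> 0" "b \<ge> 0" "c \<ge> 0" "d \<ge> 0"
    unfolding a_def b_def c_def d_def using hvol_nonneg[OF H] by auto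
  have "b + d > 0" "\<epsilon> = (a + c) / (b + d) + \<mu>" "a + b > 0" "a + b \<le> c + d"
    "c / (c + d) + \<beta> \<le> a / (a + b)"
    using assms(4,6-9) cells unfolding a_def[symmetric] c_def[symmetric] by simp_all
  hence "(\<beta> + 2 * \<mu> * \<beta> - 2 * \<mu>) * ((a + b) * (c + d)) \<le> (a - \<epsilon> * b) * (b + d)"
    using omega_cells_ge_separated[OF nonneg _ _ \<open>0 \<le> \<mu>\<close>] by blast
  thus ?thesis using cells unfolding Omega_def a_def[symmetric] b_def[symmetric]
    by (simp add: mult.commute)
qed

lemma ncut_eq:
  assumes H: "hypergraph V E w" and "X \<subseteq> V" "hvol E w X > 0" "hvol E w (V - X) > 0"
  shows "ncut V E w X = hcut E w X * hvol E w V / (hvol E w X * hvol E w (V - X))"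
proof -
  have "hvol E w V = hvol E w X + hvol E w (V - X)"
    using hvol_Diff[OF hypergraph_finite[OF H] \<open>X \<subseteq> V\<close>] by simp
  thus ?thesis using assms unfolding ncut_def hcut_Diff[OF H] by (simp add: field_simps)
qed

lemma ncut_le_cut_Omega_ratio:
  assumes H: "hypergraph V E w" and "R \<subseteq> V" "X \<subseteq> V" "hvol E w (V - R) > 0"
    and "hvol E w R / hvol E w (V - R) \<le> \<epsilon>" and \<Omega>: "Omega V E w R \<epsilon> X > 0"
  shows "ncut V E w X
           \<le> hvol E w V / hvol E w (V - R) * (hcut E w X / Omega V E w R \<epsilon> X)"
proof -
  let ?N = "hvol E w (V - R)" and ?P = "hvol E w X * hvol E w (V - X)"
  have NP: "?N * Omega V E w R \<epsilon> X \<le> ?P" using Omega_le_hvol_product assms by blast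
  moreover have "?N * Omega V E w R \<epsilon> X > 0" using assms by simp
  ultimately have "?P > 0" by linarith
  hence vol_pos: "hvol E w X > 0" "hvol E w (V - X) > 0"
    using hvol_nonneg[OF H, of X] hvol_nonneg[OF H, of "V - X"] by (auto simp: zero_less_mult_iff)
  have "hcut E w X * hvol E w V / ?P \<le> hcut E w X * hvol E w V / (?N * Omega V E w R \<epsilon> X)"
    using NP assms vol_pos hcut_nonneg[OF H] hvol_nonneg[OF H]
    by (intro divide_left_mono mult_nonneg_nonneg mult_pos_pos) auto
  thus ?thesis using ncut_eq[OF H \<open>X \<subseteq> V\<close> vol_pos] by (simp add: mult.commute)
qed

lemma cut_Omega_ratio_le_ncut:
  assumes H: "hypergraph V E w" and "T \<subseteq> V" "hvol E w (V - R) > 0"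
    and "0 < hvol E w T" "0 < hvol E w (V - T)" "0 < k"
    and k: "k * (hvol E w T * hvol E w (V - T)) \<le> hvol E w (V - R) * Omega V E w R \<epsilon> T"
  shows "hvol E w V / hvol E w (V - R) * (hcut E w T / Omega V E w R \<epsilon> T)
           \<le> ncut V E w T / k"
proof -
  let ?N = "hvol E w (V - R)" and ?Q = "hvol E w T * hvol E w (V - T)"
  have "?Q > 0" using assms by simp
  hence "k * ?Q / ?N \<le> Omega V E w R \<epsilon> T" "k * ?Q / ?N > 0"
    using k assms by (simp_all add: field_simps)
  hence "hcut E w T / Omega V E w R \<epsilon> T \<le> hcut E w T / (k * ?Q / ?N)"
    using hcut_nonneg[OF H] by (intro divide_left_mono mult_pos_pos) auto
  moreover have "hvol E w V / ?N \<ge> 0" using hvol_nonneg[OF H] assms by simp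
  ultimately have "hvol E w V / ?N * (hcut E w T / Omega V E w R \<epsilon> T)
                     \<le> hvol E w V / ?N * (hcut E w T / (k * ?Q / ?N))"
    by (rule mult_left_mono)
  also have "\<dots> = ncut V E w T / k"
    using ncut_eq[OF H \<open>T \<subseteq> V\<close>] assms by (simp add: field_simps)
  finally show ?thesis .
qed

lemma HLC_le_imp_ratio_le:
  assumes "HLC V E w R \<epsilon> S \<le> HLC V E w R \<epsilon> T" "Omega V E w R \<epsilon> T > 0"
  shows "Omega V E w R \<epsilon> S > 0"
    and "hcut E w S / Omega V E w R \<epsilon> S \<le> hcut E w T / Omega V E w R \<epsilon> T"
proof -
  show pos: "Omega V E w R \<epsilon> S > 0"
    using assms unfolding HLC_def by (cases "Omega V E w R \<epsilon> S > 0") auto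
  show "hcut E w S / Omega V E w R \<epsilon> S \<le> hcut E w T / Omega V E w R \<epsilon> T"
    using assms pos unfolding HLC_def by simp
qed

theorem theorem5:
  fixes V :: "'a set" and E :: "'a set set" and w :: "'a set \<Rightarrow> 'a set \<Rightarrow> real"
    and R T S :: "'a set" and \<epsilon> \<beta> :: real
  assumes H: "hypergraph V E w"
    and R: "R \<subseteq> V" "0 < hvol E w R" "hvol E w R \<le> hvol E w (V - R)"
    and eps: "hvol E w R / hvol E w (V - R) \<le> \<epsilon>" "\<epsilon> < hvol E w R / hvol E w (V - R) + 1"
    and Smin: "S \<subseteq> V" "\<forall>S'. S' \<subseteq> V \<longrightarrow> HLC V E w R \<epsilon> S \<le> HLC V E w R \<epsilon> S'"
    and T: "T \<subseteq> V" "0 < hvol E w T" "hvol E w T \<le> hvol E w (V - T)"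
    and beta: "2 * (\<epsilon> - hvol E w R / hvol E w (V - R)) / (1 + 2 * (\<epsilon> - hvol E w R / hvol E w (V - R))) < \<beta>" "\<beta> < 1"
    and sep: "hvol E w (T \<inter> R) / hvol E w T \<ge> hvol E w ((V - T) \<inter> R) / hvol E w (V - T) + \<beta>"
  shows "ncut V E w S \<le> (1 / (\<beta> + 2 * (\<epsilon> - hvol E w R / hvol E w (V - R)) * \<beta>
                                 - 2 * (\<epsilon> - hvol E w R / hvol E w (V - R)))) * ncut V E w T
     \<and> (\<epsilon> = hvol E w R / hvol E w (V - R) \<longrightarrow> ncut V E w S \<le> (1 / \<beta>) * ncut V E w T)"
proof -
  define \<mu> where "\<mu> = \<epsilon> - hvol E w R / hvol E w (V - R)"
  define k where "k = \<beta> + 2 * \<mu> * \<beta> - 2 * \<mu>"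
  have N: "hvol E w (V - R) > 0" using R by linarith
  have "\<mu> \<ge> 0" using eps(1) by (simp add: \<mu>_def)
  hence "k > 0" using beta(1) by (simp add: k_def \<mu>_def[symmetric] pos_divide_less_eq algebra_simps)
  have T_bound: "k * (hvol E w T * hvol E w (V - T)) \<le> hvol E w (V - R) * Omega V E w R \<epsilon> T"
    using Omega_ge_hvol_product_separated[OF H R(1) T(1) N \<open>\<mu> \<ge> 0\<close> _ T(2,3) sep]
    by (simp add: k_def \<mu>_def)
  moreover have "0 < k * (hvol E w T * hvol E w (V - T))" using \<open>k > 0\<close> T(2,3) by simp
  ultimately have "hvol E w (V - R) * Omega V E w R \<epsilon> T > 0" by linarith
  hence "Omega V E w R \<epsilon> T > 0" using N by (simp add: zero_less_mult_iff)
  note S_vs_T = HLC_le_imp_ratio_le[OF Smin(2)[rule_format, OF T(1)] this]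
  have "ncut V E w S
          \<le> hvol E w V / hvol E w (V - R) * (hcut E w S / Omega V E w R \<epsilon> S)"
    using ncut_le_cut_Omega_ratio[OF H R(1) Smin(1) N eps(1) S_vs_T(1)] .
  also have "\<dots> \<le> hvol E w V / hvol E w (V - R) * (hcut E w T / Omega V E w R \<epsilon> T)"
    using S_vs_T(2) hvol_nonneg[OF H, of V] N by (intro mult_left_mono) auto
  also have "\<dots> \<le> ncut V E w T / k"
    using cut_Omega_ratio_le_ncut[OF H T(1) N T(2) _ \<open>k > 0\<close> T_bound] T(2,3) by simp
  finally have "ncut V E w S \<le> ncut V E w T / k" .
  moreover have "k = \<beta>" if "\<epsilon> = hvol E w R / hvol E w (V - R)"
    using that by (simp add: k_def \<mu>_def)
  ultimately show ?thesis unfolding k_def[unfolded \<mu>_def, symmetric] by auto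
qed

end
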